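(* Let $G$ be a finite group and let $\pi$ be a set of primes. Then \[|\mathrm{Ord}(G,\pi)|\ \ge \prod_{C \text{ a chief factor of } G} f_\pi(C),\] where the product is over the chief factors of a chief series of $G$ (with multiplicity).
   Context: For a subset $X$ of a finite group and a set $\pi$ of primes, $\mathrm{Ord}(X,\pi)$ is the set of $\pi$-elements of $X$ (elements all of whose order's prime divisors lie in $\pi$). For $G=S^t$ a direct power of a simple group $S$, define $f_\pi(G)=1$ if $S$ is an abelian $\pi'$-group; $f_\pi(G)=|G|$ if $G$ is an abelian $\pi$-group; and, if $S$ is nonabelian, $f_\pi(G)=\min\{|\mathrm{Ord}(G\alpha,\pi)| : \alpha\in\mathrm{Ord}(\mathrm{Aut}(G),\pi)\}$, where the coset $G\alpha$ is viewed as a subset of $\mathrm{Aut}(G)$ (with $G$ identified with $\mathrm{Inn}(G)$). Every chief factor of a finite group is of the form $S^t$. *)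

theory Defs
  imports "HOL-Algebra.Algebra"
begin

definition Ord_pi :: "('a, 'b) monoid_scheme \<Rightarrow> 'a set \<Rightarrow> nat set \<Rightarrow> 'a set" where
  "Ord_pi Gr Y \<pi> = {x \<in> Y. x \<in> carrier Gr \<and>
      (\<forall>p. Factorial_Ring.prime p \<longrightarrow> p dvd group.ord Gr x \<longrightarrow> p \<in> \<pi>)}"

definition Ord_pi' :: "('a, 'b) monoid_scheme \<Rightarrow> 'a set \<Rightarrow> nat set \<Rightarrow> 'a set" where
  "Ord_pi' Gr Y \<pi> = {x \<in> Y. x \<in> carrier Gr \<and>
      (\<forall>p. Factorial_Ring.prime p \<longrightarrow> p dvd group.ord Gr x \<longrightarrow> p \<notin> \<pi>)}"

definition inn :: "('a, 'b) monoid_scheme \<Rightarrow> 'a \<Rightarrow> ('a \<Rightarrow> 'a)" where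
  "inn G g = (\<lambda>x \<in> carrier G. g \<otimes>\<^bsub>G\<^esub> x \<otimes>\<^bsub>G\<^esub> inv\<^bsub>G\<^esub> g)"

definition Inn :: "('a, 'b) monoid_scheme \<Rightarrow> ('a \<Rightarrow> 'a) set" where
  "Inn G = inn G ` carrier G"

text \<open>The function f_pi of a chief factor C (which is isomorphic to S^t, S simple).
  C is abelian iff S is; C is a \<pi>-group (\<pi>'-group) iff S is.\<close>
definition f_pi :: "nat set \<Rightarrow> ('a, 'b) monoid_scheme \<Rightarrow> nat" where
  "f_pi \<pi> C =
    (if comm_group C \<and> Ord_pi' C (carrier C) \<pi> = carrier C then 1
     else if comm_group C \<and> Ord_pi C (carrier C) \<pi> = carrier C then order C
     else Min {card (Ord_pi (AutoGroup C) (Inn C #>\<^bsub>AutoGroup C\<^esub> \<alpha>) \<pi>) | \<alpha>.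
                 \<alpha> \<in> Ord_pi (AutoGroup C) (carrier (AutoGroup C)) \<pi>})"

definition chief_series :: "('a, 'b) monoid_scheme \<Rightarrow> 'a set list \<Rightarrow> bool" where
  "chief_series G Ns \<longleftrightarrow> Ns \<noteq> [] \<and> hd Ns = {\<one>\<^bsub>G\<^esub>} \<and> last Ns = carrier G \<and>
     (\<forall>i < length Ns. Ns ! i \<lhd> G) \<and>
     (\<forall>i. Suc i < length Ns \<longrightarrow> Ns ! i \<subset> Ns ! Suc i \<and>
        \<not> (\<exists>M. M \<lhd> G \<and> Ns ! i \<subset> M \<and> M \<subset> Ns ! Suc i))"

definition chief_factor :: "('a, 'b) monoid_scheme \<Rightarrow> 'a set list \<Rightarrow> nat \<Rightarrow> 'a set monoid" where
  "chief_factor G Ns i = (G\<lparr>carrier := Ns ! Suc i\<rparr>) Mod (Ns ! i)"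

end

theory Submission
  imports Defs
begin

text \<open>Induct along the chief series 1 = N_0 < ... < N_k = G, using the surjections
  G/N_i \<rightarrow> G/N_(i+1), whose kernels K are minimal normal. It suffices that above each
  \<pi>-element y of G/N_(i+1) there are at least f_\<pi>(K) \<pi>-elements. Some \<pi>-element x lies
  above y: take the \<pi>-part of any preimage. If K is a \<pi>-group, the whole fibre xK consists of
  \<pi>-elements. Otherwise conjugation by x is a \<pi>-automorphism \<alpha> of K, and every \<pi>-element of
  Inn(K) \<alpha> is conjugation by an element of xK; as the centre of K is 1 or K by minimality,
  that element can be chosen to be a \<pi>-element.\<close>

definition pi_number :: "nat set \<Rightarrow> nat \<Rightarrow> bool" where
  "pi_number \<pi> m \<longleftrightarrow> m > 0 \<and> (\<forall>p. Factorial_Ring.prime p \<longrightarrow> p dvd m \<longrightarrow> p \<in> \<pi>)"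

lemma pi_number_mult: "pi_number \<pi> a \<Longrightarrow> pi_number \<pi> b \<Longrightarrow> pi_number \<pi> (a * b)"
  by (auto simp: pi_number_def prime_dvd_mult_iff)

lemma coprime_if_no_common_prime:
  fixes a b :: nat
  assumes "\<And>p. Factorial_Ring.prime p \<Longrightarrow> p dvd a \<Longrightarrow> p dvd b \<Longrightarrow> False"
  shows "coprime a b"
proof (rule ccontr)
  assume "\<not> coprime a b"
  then obtain p where "Factorial_Ring.prime p" "p dvd gcd a b"
    by (metis coprime_iff_gcd_eq_1 prime_factor_nat)
  then show False using assms by auto
qed

lemma pi_part_decomposition:
  fixes n :: nat
  assumes "n > 0"
  shows "\<exists>a b. n = a * b \<and> pi_number \<pi> a \<and> (\<forall>p. Factorial_Ring.prime p \<longrightarrow> p dvd b \<longrightarrow> p \<notin> \<pi>)"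
  using assms
proof (induction n rule: less_induct)
  case (less n)
  show ?case
  proof (cases "\<exists>p. Factorial_Ring.prime p \<and> p dvd n \<and> p \<notin> \<pi>")
    case False
    then have "pi_number \<pi> n" using less.prems by (auto simp: pi_number_def)
    then show ?thesis by (intro exI[of _ n] exI[of _ 1]) auto
  next
    case True
    then obtain p n' where p: "Factorial_Ring.prime p" "p \<notin> \<pi>" and n': "n = p * n'"
      by (auto elim: dvdE)
    have "0 < n'" "n' < n" using less.prems n' prime_gt_1_nat[OF p(1)] by auto
    then obtain a b where ab: "n' = a * b" "pi_number \<pi> a"
        "\<forall>q. Factorial_Ring.prime q \<longrightarrow> q dvd b \<longrightarrow> q \<notin> \<pi>"
      using less.IH by blast
    have "\<forall>q. Factorial_Ring.prime q \<longrightarrow> q dvd p * b \<longrightarrow> q \<notin> \<pi>"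
      using ab(3) p by (metis prime_dvd_mult_iff primes_dvd_imp_eq)
    then show ?thesis using ab n' by (intro exI[of _ a] exI[of _ "p * b"]) auto
  qed
qed

lemma card_mult_le_card_by_fibres:
  assumes "finite A" and "\<And>y. y \<in> B \<Longrightarrow> n \<le> card {x \<in> A. f x = y}"
  shows "n * card B \<le> card A"
proof (cases "finite B")
  case True
  have "n * card B = (\<Sum>y\<in>B. n)" by simp
  also have "\<dots> \<le> (\<Sum>y\<in>B. card {x \<in> A. f x = y})" using assms(2) by (rule sum_mono)
  also have "\<dots> = card (\<Union>y\<in>B. {x \<in> A. f x = y})"
    using True assms(1) by (intro card_UN_disjoint[symmetric]) auto
  also have "\<dots> \<le> card A" using assms(1) by (intro card_mono) auto
  finally show ?thesis .
qed simp

lemma prod_mult_le_by_telescoping: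
  fixes f c :: "nat \<Rightarrow> nat"
  assumes "\<And>i. i < n \<Longrightarrow> f i * c (Suc i) \<le> c i"
  shows "(\<Prod>i<n. f i) * c n \<le> c 0"
  using assms
proof (induction n)
  case (Suc n)
  have "(\<Prod>i<Suc n. f i) * c (Suc n) = (\<Prod>i<n. f i) * (f n * c (Suc n))"
    by (simp add: mult.assoc)
  also have "\<dots> \<le> (\<Prod>i<n. f i) * c n" using Suc.prems by simp
  also have "\<dots> \<le> c 0" using Suc by simp
  finally show ?case .
qed simp

lemma finite_Ord_pi: "finite (carrier G) \<Longrightarrow> finite (Ord_pi G Y \<pi>)"
  by (rule finite_subset[rotated]) (auto simp: Ord_pi_def)

lemma finite_AutoGroup:
  assumes "finite (carrier G)"
  shows "finite (carrier (AutoGroup G))"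
proof (rule finite_subset)
  show "carrier (AutoGroup G) \<subseteq> carrier G \<rightarrow>\<^sub>E carrier G"
    by (auto simp: AutoGroup_def auto_def Bij_def bij_betw_def PiE_def)
  show "finite (carrier G \<rightarrow>\<^sub>E carrier G)" using assms by (simp add: finite_PiE)
qed

context group
begin

lemma Ord_piI:
  assumes "x \<in> Y" "x \<in> carrier G" "pi_number \<pi> m" "x [^] m = \<one>"
  shows "x \<in> Ord_pi G Y \<pi>"
proof -
  have "ord x dvd m" using assms(2,4) pow_eq_id by blast
  then show ?thesis using assms unfolding Ord_pi_def pi_number_def by (blast intro: dvd_trans)
qed

lemma Ord_pi_iff:
  assumes "finite (carrier G)"
  shows "x \<in> Ord_pi G Y \<pi> \<longleftrightarrow> x \<in> Y \<and> x \<in> carrier G \<and> (\<exists>m. pi_number \<pi> m \<and> x [^] m = \<one>)"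
proof
  assume x: "x \<in> Ord_pi G Y \<pi>"
  then have "x \<in> carrier G" by (simp add: Ord_pi_def)
  moreover have "pi_number \<pi> (ord x)"
    using x ord_ge_1[OF assms \<open>x \<in> carrier G\<close>] by (auto simp: Ord_pi_def pi_number_def)
  ultimately show "x \<in> Y \<and> x \<in> carrier G \<and> (\<exists>m. pi_number \<pi> m \<and> x [^] m = \<one>)"
    using x by (auto simp: Ord_pi_def)
qed (blast intro: Ord_piI)

lemma one_in_Ord_pi: "\<one> \<in> Ord_pi G (carrier G) \<pi>"
  by (rule Ord_piI[of _ _ _ 1]) (auto simp: pi_number_def)

lemma card_Ord_pi_pos: "finite (carrier G) \<Longrightarrow> 0 < card (Ord_pi G (carrier G) \<pi>)"
  using finite_Ord_pi one_in_Ord_pi card_gt_0_iff by blast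

lemma Ord_pi_if_pow_Ord_pi:
  assumes "finite (carrier G)" "x \<in> carrier G" "pi_number \<pi> m" "x [^] m \<in> Ord_pi G Y \<pi>"
  shows "x \<in> Ord_pi G (carrier G) \<pi>"
proof -
  obtain k where "pi_number \<pi> k" "(x [^] m) [^] k = \<one>"
    using assms(1,4) Ord_pi_iff by blast
  then show ?thesis
    using assms(2,3) by (intro Ord_piI[of _ _ _ "m * k"]) (auto simp: pi_number_mult nat_pow_pow)
qed

lemma ord_subgroup:
  assumes "subgroup K G"
  shows "group.ord (G\<lparr>carrier := K\<rparr>) x = ord x"
proof -
  have "group (G\<lparr>carrier := K\<rparr>)" using subgroup.subgroup_is_group[OF assms is_group] .
  moreover have "x [^]\<^bsub>G\<lparr>carrier := K\<rparr>\<^esub> (n::nat) = x [^] n" for n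
    by (simp add: nat_pow_def)
  ultimately show ?thesis by (simp add: group.ord_def ord_def)
qed

lemma Ord_pi_subgroup:
  assumes "subgroup K G"
  shows "Ord_pi (G\<lparr>carrier := K\<rparr>) Y \<pi> = Ord_pi G Y \<pi> \<inter> K"
  using ord_subgroup[OF assms] subgroup.subset[OF assms] by (auto simp: Ord_pi_def)

end

context group_hom
begin

lemma Ord_pi_image:
  assumes "finite (carrier G)" "x \<in> Ord_pi G (carrier G) \<pi>"
  shows "h x \<in> Ord_pi H (carrier H) \<pi>"
proof -
  obtain m where "x \<in> carrier G" "pi_number \<pi> m" "x [^]\<^bsub>G\<^esub> m = \<one>\<^bsub>G\<^esub>"
    using assms G.Ord_pi_iff by blast
  then show ?thesis by (intro H.Ord_piI[of _ _ _ m]) (auto simp flip: hom_nat_pow)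
qed

text \<open>The \<pi>-element is x0 ^ (b s), where b is the \<pi>'-part of the order of x0 and
  b s \<equiv> 1 modulo its \<pi>-part.\<close>

lemma Ord_pi_fibre_nonempty:
  assumes fin: "finite (carrier G)" and x0: "x0 \<in> carrier G"
    and y: "h x0 \<in> Ord_pi H (carrier H) \<pi>"
  shows "\<exists>x \<in> Ord_pi G (carrier G) \<pi>. h x = h x0"
proof -
  define n where "n = G.ord x0"
  have "n > 0" using G.ord_ge_1[OF fin x0] by (simp add: n_def)
  then obtain a b where ab: "n = a * b" "pi_number \<pi> a"
    and b: "\<forall>p. Factorial_Ring.prime p \<longrightarrow> p dvd b \<longrightarrow> p \<notin> \<pi>"
    using pi_part_decomposition by blast
  have yc: "h x0 \<in> carrier H" using x0 by simp
  have "h x0 [^]\<^bsub>H\<^esub> n = \<one>\<^bsub>H\<^esub>" using x0 by (simp add: n_def flip: hom_nat_pow)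
  then have "H.ord (h x0) dvd a * b" using H.pow_eq_id[OF yc] ab(1) by simp
  moreover have "coprime (H.ord (h x0)) b"
    using y b by (intro coprime_if_no_common_prime) (auto simp: Ord_pi_def)
  ultimately have "H.ord (h x0) dvd a" using coprime_dvd_mult_left_iff by blast
  then have ya: "h x0 [^]\<^bsub>H\<^esub> a = \<one>\<^bsub>H\<^esub>" using H.pow_eq_id[OF yc] by simp
  have "coprime b a" using ab(2) b by (intro coprime_if_no_common_prime) (auto simp: pi_number_def)
  moreover have "b \<noteq> 0" using \<open>n > 0\<close> ab(1) by auto
  ultimately obtain s t where st: "b * s = a * t + 1"
    using bezout_nat[of b a] by (auto simp: coprime_iff_gcd_eq_1)
  define x where "x = x0 [^]\<^bsub>G\<^esub> (b * s)"
  have "h x = h x0 [^]\<^bsub>H\<^esub> (a * t + 1)"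
    unfolding x_def st using x0 by (rule hom_nat_pow)
  also have "\<dots> = (h x0 [^]\<^bsub>H\<^esub> a) [^]\<^bsub>H\<^esub> t \<otimes>\<^bsub>H\<^esub> h x0"
    using yc by (simp add: H.nat_pow_pow)
  also have "\<dots> = h x0" using ya yc by simp
  finally have "h x = h x0" .
  moreover have "x [^]\<^bsub>G\<^esub> a = (x0 [^]\<^bsub>G\<^esub> n) [^]\<^bsub>G\<^esub> s"
    using x0 ab(1) by (simp add: x_def G.nat_pow_pow mult_ac)
  then have "x [^]\<^bsub>G\<^esub> a = \<one>\<^bsub>G\<^esub>" using x0 by (simp add: n_def)
  ultimately show ?thesis using x0 ab(2) by (intro bexI[of _ x] G.Ord_piI) (auto simp: x_def)
qed

lemma card_Ord_pi_le_of_surj: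
  assumes fin: "finite (carrier G)" and surj: "h ` carrier G = carrier H"
  shows "card (Ord_pi H (carrier H) \<pi>) \<le> card (Ord_pi G (carrier G) \<pi>)"
proof -
  have "Ord_pi H (carrier H) \<pi> \<subseteq> h ` Ord_pi G (carrier G) \<pi>"
  proof
    fix y assume y: "y \<in> Ord_pi H (carrier H) \<pi>"
    then have "y \<in> h ` carrier G" using surj by (simp add: Ord_pi_def)
    then obtain x0 where "x0 \<in> carrier G" "h x0 = y" by blast
    then obtain x where "x \<in> Ord_pi G (carrier G) \<pi>" "h x = y"
      using Ord_pi_fibre_nonempty[OF fin, of x0] y by blast
    then show "y \<in> h ` Ord_pi G (carrier G) \<pi>" by blast
  qed
  then show ?thesis using surj_card_le finite_Ord_pi[OF fin] by blast
qed

lemma card_kernel_le_card_fibre: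
  assumes fin: "finite (carrier G)" and pi_kernel: "kernel G H h \<subseteq> Ord_pi G (carrier G) \<pi>"
    and x: "x \<in> Ord_pi G (carrier G) \<pi>"
  shows "card (kernel G H h) \<le> card {z \<in> Ord_pi G (carrier G) \<pi>. h z = h x}"
proof -
  obtain m where xc: "x \<in> carrier G" and m: "pi_number \<pi> m" "x [^]\<^bsub>G\<^esub> m = \<one>\<^bsub>G\<^esub>"
    using x G.Ord_pi_iff[OF fin] by blast
  have "(\<otimes>\<^bsub>G\<^esub>) x ` kernel G H h \<subseteq> {z \<in> Ord_pi G (carrier G) \<pi>. h z = h x}"
  proof
    fix z assume "z \<in> (\<otimes>\<^bsub>G\<^esub>) x ` kernel G H h"
    then obtain k where k: "k \<in> carrier G" "h k = \<one>\<^bsub>H\<^esub>" and z: "z = x \<otimes>\<^bsub>G\<^esub> k"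
      by (auto simp: kernel_def)
    have zc: "z \<in> carrier G" and hz: "h z = h x" using xc k z by auto
    have "h (z [^]\<^bsub>G\<^esub> m) = \<one>\<^bsub>H\<^esub>" using zc xc hz m(2) by (metis hom_nat_pow hom_one)
    then have "z [^]\<^bsub>G\<^esub> m \<in> Ord_pi G (carrier G) \<pi>" using zc pi_kernel by (auto simp: kernel_def)
    then show "z \<in> {z \<in> Ord_pi G (carrier G) \<pi>. h z = h x}"
      using G.Ord_pi_if_pow_Ord_pi[OF fin zc m(1)] hz by blast
  qed
  moreover have "inj_on ((\<otimes>\<^bsub>G\<^esub>) x) (kernel G H h)"
    using xc by (auto intro: inj_onI simp: kernel_def)
  then have "card (kernel G H h) = card ((\<otimes>\<^bsub>G\<^esub>) x ` kernel G H h)"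
    by (simp add: card_image)
  ultimately show ?thesis using finite_Ord_pi[OF fin] by (simp add: card_mono)
qed

end

text \<open>Unlike inn (G\<lparr>carrier := K\<rparr>), this is defined for all g in G.\<close>

definition conj_action :: "('a, 'b) monoid_scheme \<Rightarrow> 'a set \<Rightarrow> 'a \<Rightarrow> ('a \<Rightarrow> 'a)" where
  "conj_action G K g = (\<lambda>k \<in> K. g \<otimes>\<^bsub>G\<^esub> k \<otimes>\<^bsub>G\<^esub> inv\<^bsub>G\<^esub> g)"

context group
begin

lemma group_hom_conj_action:
  assumes K: "K \<lhd> G"
  shows "group_hom G (AutoGroup (G\<lparr>carrier := K\<rparr>)) (conj_action G K)"
proof -
  have Ks: "subgroup K G" using K normal_imp_subgroup by blast
  have Kc: "k \<in> carrier G" if "k \<in> K" for k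
    using Ks subgroup.subset that by blast
  have closed: "g \<otimes> (k \<otimes> inv g) \<in> K" if "g \<in> carrier G" "k \<in> K" for g k
    using normal.inv_op_closed2[OF K that] that Kc by (simp add: m_assoc)
  have cancel: "inv g \<otimes> (g \<otimes> z) = z" if "g \<in> carrier G" "z \<in> carrier G" for g z
    using that by (simp add: m_assoc[symmetric])
  have comp: "conj_action G K a (conj_action G K b k) = conj_action G K (a \<otimes> b) k"
    if "a \<in> carrier G" "b \<in> carrier G" "k \<in> K" for a b k
    using that closed Kc by (simp add: conj_action_def inv_mult_group m_assoc)
  have one: "conj_action G K \<one> k = k" if "k \<in> K" for k
    using that Kc by (simp add: conj_action_def)
  have auto: "conj_action G K g \<in> auto (G\<lparr>carrier := K\<rparr>)" if g: "g \<in> carrier G" for g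
  proof -
    have "bij_betw (conj_action G K g) K K"
    proof (rule bij_betwI[where g = "conj_action G K (inv g)"])
      show "conj_action G K g \<in> K \<rightarrow> K" "conj_action G K (inv g) \<in> K \<rightarrow> K"
        using closed[OF g] closed[OF inv_closed[OF g]] g Kc by (auto simp: conj_action_def m_assoc)
      show "conj_action G K (inv g) (conj_action G K g k) = k"
        and "conj_action G K g (conj_action G K (inv g) k) = k" if "k \<in> K" for k
        using comp one g that by simp_all
    qed
    moreover have "conj_action G K g \<in> hom (G\<lparr>carrier := K\<rparr>) (G\<lparr>carrier := K\<rparr>)"
      using closed g Kc subgroup.m_closed[OF Ks]
      by (intro homI) (auto simp: conj_action_def m_assoc cancel)
    ultimately show ?thesis by (simp add: auto_def Bij_def conj_action_def)
  qed
  have "conj_action G K \<in> hom G (AutoGroup (G\<lparr>carrier := K\<rparr>))"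
  proof (rule homI)
    show "conj_action G K g \<in> carrier (AutoGroup (G\<lparr>carrier := K\<rparr>))" if "g \<in> carrier G" for g
      using auto[OF that] by (simp add: AutoGroup_def)
    fix a b assume a: "a \<in> carrier G" and b: "b \<in> carrier G"
    have "conj_action G K a \<in> Bij K" "conj_action G K b \<in> Bij K"
      using auto[OF a] auto[OF b] by (auto simp: auto_def)
    moreover have "conj_action G K (a \<otimes> b) = compose K (conj_action G K a) (conj_action G K b)"
      by (rule extensionalityI[of _ K])
         (simp_all add: conj_action_def[of G K "a \<otimes> b"] compose_eq comp[OF a b])
    ultimately show "conj_action G K (a \<otimes> b) =
        conj_action G K a \<otimes>\<^bsub>AutoGroup (G\<lparr>carrier := K\<rparr>)\<^esub> conj_action G K b"
      by (simp add: AutoGroup_def BijGroup_def)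
  qed
  then show ?thesis
    using group.AutoGroup[OF subgroup.subgroup_is_group[OF Ks is_group]]
    by (simp add: group_hom_def group_hom_axioms_def is_group)
qed

lemma inn_eq_conj_action:
  assumes "subgroup K G" "g \<in> K"
  shows "inn (G\<lparr>carrier := K\<rparr>) g = conj_action G K g"
  using m_inv_consistent[OF assms] by (simp add: inn_def conj_action_def)

end

locale minimal_normal_kernel = group_hom +
  assumes finite_carrier: "finite (carrier G)"
    and surjective: "h ` carrier G = carrier H"
    and kernel_minimal: "\<And>A. A \<lhd> G \<Longrightarrow> A \<subseteq> kernel G H h \<Longrightarrow> A = {\<one>\<^bsub>G\<^esub>} \<or> A = kernel G H h"
begin

lemma finite_kernel: "finite (kernel G H h)"
  using finite_carrier by (rule finite_subset[rotated]) (auto simp: kernel_def)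

text \<open>Z, the centre of the kernel K, is normal in G, so Z = 1 or Z = K. If Z = K, the coset
  is just {conj_action x}. If Z = 1 and conj_action (n x) has \<pi>-order, a \<pi>-power of n x
  lies in Z, so n x is itself a \<pi>-element.\<close>

lemma Ord_pi_Inn_coset_subset_conj_fibre:
  assumes x: "x \<in> Ord_pi G (carrier G) \<pi>"
  shows "Ord_pi (AutoGroup (G\<lparr>carrier := kernel G H h\<rparr>))
      (Inn (G\<lparr>carrier := kernel G H h\<rparr>) #>\<^bsub>AutoGroup (G\<lparr>carrier := kernel G H h\<rparr>)\<^esub>
         conj_action G (kernel G H h) x) \<pi>
    \<subseteq> conj_action G (kernel G H h) ` {z \<in> Ord_pi G (carrier G) \<pi>. h z = h x}"
    (is "Ord_pi ?A (Inn ?C #>\<^bsub>?A\<^esub> ?c x) \<pi> \<subseteq> ?c ` ?F")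
proof
  let ?K = "kernel G H h"
  interpret c: group_hom G ?A ?c using G.group_hom_conj_action[OF normal_kernel] .
  define Z where "Z = ?K \<inter> kernel G ?A ?c"
  have "Z \<lhd> G" unfolding Z_def by (intro G.normal_subgroup_intersect normal_kernel c.normal_kernel)
  then have Z: "Z = {\<one>\<^bsub>G\<^esub>} \<or> Z = ?K" using kernel_minimal by (auto simp: Z_def)
  obtain m where xc: "x \<in> carrier G" and m: "pi_number \<pi> m" "x [^]\<^bsub>G\<^esub> m = \<one>\<^bsub>G\<^esub>"
    using x G.Ord_pi_iff[OF finite_carrier] by blast
  fix \<beta> assume \<beta>: "\<beta> \<in> Ord_pi ?A (Inn ?C #>\<^bsub>?A\<^esub> ?c x) \<pi>"
  obtain n where n: "n \<in> ?K" and \<beta>_eq: "\<beta> = ?c (n \<otimes>\<^bsub>G\<^esub> x)"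
  proof -
    obtain n where "n \<in> ?K" "\<beta> = inn ?C n \<otimes>\<^bsub>?A\<^esub> ?c x"
      using \<beta> by (auto simp: Ord_pi_def r_coset_def Inn_def)
    moreover have "n \<in> carrier G" using \<open>n \<in> ?K\<close> by (simp add: kernel_def)
    ultimately show thesis
      using that G.inn_eq_conj_action[OF subgroup_kernel] xc by simp
  qed
  have nc: "n \<in> carrier G" using n by (simp add: kernel_def)
  have hz: "h (n \<otimes>\<^bsub>G\<^esub> x) = h x" using n nc xc by (simp add: kernel_def)
  from Z show "\<beta> \<in> ?c ` ?F"
  proof
    assume "Z = ?K"
    then have "?c n = \<one>\<^bsub>?A\<^esub>" using n by (auto simp: Z_def kernel_def)
    then have "\<beta> = ?c x" using \<beta>_eq nc xc by simp
    then show ?thesis using x by auto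
  next
    assume Z1: "Z = {\<one>\<^bsub>G\<^esub>}"
    obtain m' where m': "pi_number \<pi> m'" "\<beta> [^]\<^bsub>?A\<^esub> m' = \<one>\<^bsub>?A\<^esub>"
      using \<beta> c.H.Ord_pi_iff[OF finite_AutoGroup] finite_kernel by auto
    define w where "w = (n \<otimes>\<^bsub>G\<^esub> x) [^]\<^bsub>G\<^esub> (m' * m)"
    have wc: "w \<in> carrier G" using nc xc by (simp add: w_def)
    have "h w = (h (x [^]\<^bsub>G\<^esub> m)) [^]\<^bsub>H\<^esub> m'"
      using nc xc hz by (simp add: w_def hom_nat_pow H.nat_pow_pow mult.commute)
    then have "w \<in> ?K" using wc m(2) by (simp add: kernel_def)
    moreover have "?c w = (\<beta> [^]\<^bsub>?A\<^esub> m') [^]\<^bsub>?A\<^esub> m"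
      using nc xc by (simp add: w_def \<beta>_eq c.hom_nat_pow c.H.nat_pow_pow)
    then have "?c w = \<one>\<^bsub>?A\<^esub>" using m'(2) by simp
    ultimately have "w \<in> Z" using wc by (simp add: Z_def kernel_def)
    then have "(n \<otimes>\<^bsub>G\<^esub> x) [^]\<^bsub>G\<^esub> (m' * m) = \<one>\<^bsub>G\<^esub>" using Z1 by (simp add: w_def)
    then have "n \<otimes>\<^bsub>G\<^esub> x \<in> ?F"
      using nc xc hz m m' by (auto intro: G.Ord_piI[of _ _ _ "m' * m"] pi_number_mult)
    then show ?thesis using \<beta>_eq by blast
  qed
qed

lemma f_pi_kernel_le_card_fibre:
  assumes y: "y \<in> Ord_pi H (carrier H) \<pi>"
  shows "f_pi \<pi> (G\<lparr>carrier := kernel G H h\<rparr>) \<le> card {x \<in> Ord_pi G (carrier G) \<pi>. h x = y}"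
proof -
  let ?K = "kernel G H h"
  let ?C = "G\<lparr>carrier := ?K\<rparr>" and ?A = "AutoGroup (G\<lparr>carrier := ?K\<rparr>)"
  let ?F = "{x \<in> Ord_pi G (carrier G) \<pi>. h x = y}"
  have "y \<in> h ` carrier G" using y surjective by (simp add: Ord_pi_def)
  then obtain x where x: "x \<in> Ord_pi G (carrier G) \<pi>" "h x = y"
    using Ord_pi_fibre_nonempty[OF finite_carrier] y by blast
  have finF: "finite ?F" using finite_Ord_pi[OF finite_carrier] by simp
  have "1 \<le> card ?F" using finF x by (simp add: Suc_le_eq card_gt_0_iff) blast
  show ?thesis
  proof (cases "comm_group ?C \<and> Ord_pi' ?C (carrier ?C) \<pi> = carrier ?C")
    case True
    then show ?thesis using \<open>1 \<le> card ?F\<close> by (simp add: f_pi_def)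
  next
    case not_pi': False
    show ?thesis
    proof (cases "comm_group ?C \<and> Ord_pi ?C (carrier ?C) \<pi> = carrier ?C")
      case True
      then have "Ord_pi G ?K \<pi> \<inter> ?K = ?K"
        using G.Ord_pi_subgroup[OF subgroup_kernel, of ?K \<pi>] by simp
      then have "?K \<subseteq> Ord_pi G (carrier G) \<pi>" by (auto simp: Ord_pi_def)
      then have "card ?K \<le> card ?F"
        using card_kernel_le_card_fibre[OF finite_carrier _ x(1)] x(2) by simp
      then show ?thesis using not_pi' True by (simp add: f_pi_def order_def)
    next
      case False
      interpret c: group_hom G ?A "conj_action G ?K"
        using G.group_hom_conj_action[OF normal_kernel] .
      have "finite (Ord_pi ?A (carrier ?A) \<pi>)"
        using finite_kernel by (intro finite_Ord_pi finite_AutoGroup) simp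
      moreover have "conj_action G ?K x \<in> Ord_pi ?A (carrier ?A) \<pi>"
        using c.Ord_pi_image[OF finite_carrier x(1)] .
      ultimately have "f_pi \<pi> ?C \<le> card (Ord_pi ?A (Inn ?C #>\<^bsub>?A\<^esub> conj_action G ?K x) \<pi>)"
        using not_pi' False by (auto simp: f_pi_def intro!: Min_le)
      also have "\<dots> \<le> card (conj_action G ?K ` ?F)"
        using Ord_pi_Inn_coset_subset_conj_fibre[OF x(1)] x(2) finF by (intro card_mono) auto
      also have "\<dots> \<le> card ?F" using finF by (rule card_image_le)
      finally show ?thesis .
    qed
  qed
qed

lemma f_pi_kernel_mult_card_Ord_pi_le:
  "f_pi \<pi> (G\<lparr>carrier := kernel G H h\<rparr>) * card (Ord_pi H (carrier H) \<pi>)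
    \<le> card (Ord_pi G (carrier G) \<pi>)"
  using finite_Ord_pi[OF finite_carrier] f_pi_kernel_le_card_fibre
  by (rule card_mult_le_card_by_fibres)

end

lemma finite_carrier_FactGroup: "finite (carrier G) \<Longrightarrow> finite (carrier (G Mod N))"
  by (simp add: carrier_FactGroup)

lemma FactGroup_restrict_carrier:
  "(G Mod N)\<lparr>carrier := rcosets\<^bsub>G\<lparr>carrier := M\<rparr>\<^esub> N\<rparr> = G\<lparr>carrier := M\<rparr> Mod N"
  by (simp add: FactGroup_def set_mult_def fun_eq_iff)

context group
begin

lemma r_coset_restrict_carrier: "N #>\<^bsub>G\<lparr>carrier := M\<rparr>\<^esub> g = N #> g"
  by (simp add: r_coset_def)

lemma set_mult_subgroup_absorb:
  assumes "subgroup N G" "subgroup M G" "N \<subseteq> M"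
  shows "M <#> N = M"
proof
  show "M <#> N \<subseteq> M" using assms subgroup.m_closed by (fastforce simp: set_mult_def)
  show "M \<subseteq> M <#> N"
  proof
    fix m assume "m \<in> M"
    then have "m = m \<otimes> \<one>" "\<one> \<in> N" using assms subgroup.subset subgroup.one_closed by force+
    then show "m \<in> M <#> N" using \<open>m \<in> M\<close> unfolding set_mult_def by blast
  qed
qed

lemma card_Ord_pi_Mod_one_le:
  assumes "finite (carrier G)"
  shows "card (Ord_pi (G Mod {\<one>}) (carrier (G Mod {\<one>})) \<pi>) \<le> card (Ord_pi G (carrier G) \<pi>)"
proof -
  interpret one: normal "{\<one>}" G by (rule one_is_normal)
  have "group_hom G (G Mod {\<one>}) ((#>) {\<one>})"
    using one.r_coset_hom_Mod one.factorgroup_is_group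
    by (simp add: group_hom_def group_hom_axioms_def is_group)
  moreover have "(#>) {\<one>} ` carrier G = carrier (G Mod {\<one>})"
    by (simp add: carrier_FactGroup)
  ultimately show ?thesis using group_hom.card_Ord_pi_le_of_surj[OF _ assms] by simp
qed

context
  fixes N M
  assumes N: "N \<lhd> G" and M: "M \<lhd> G" and NM: "N \<subseteq> M"
begin

lemma FactGroup_map_r_coset:
  assumes "g \<in> carrier G"
  shows "M <#> (N #> g) = M #> g"
proof -
  have "subgroup N G" "subgroup M G" using N M normal_imp_subgroup by blast+
  then show ?thesis
    using set_mult_subgroup_absorb[OF _ _ NM] setmult_rcos_assoc assms subgroup.subset by metis
qed

lemma group_hom_FactGroup_map: "group_hom (G Mod N) (G Mod M) ((<#>) M)"
proof -
  interpret N: normal N G by (fact N)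
  interpret M: normal M G by (fact M)
  have "(<#>) M \<in> hom (G Mod N) (G Mod M)"
  proof (rule homI)
    fix W assume "W \<in> carrier (G Mod N)"
    then show "M <#> W \<in> carrier (G Mod M)"
      by (auto simp: FactGroup_def RCOSETS_def FactGroup_map_r_coset)
  next
    fix W V assume "W \<in> carrier (G Mod N)" "V \<in> carrier (G Mod N)"
    then obtain a b where "a \<in> carrier G" "W = N #> a" "b \<in> carrier G" "V = N #> b"
      by (auto simp: FactGroup_def RCOSETS_def)
    then show "M <#> (W \<otimes>\<^bsub>G Mod N\<^esub> V) = (M <#> W) \<otimes>\<^bsub>G Mod M\<^esub> (M <#> V)"
      by (simp add: N.rcos_sum M.rcos_sum FactGroup_map_r_coset)
  qed
  then show ?thesis
    using N.factorgroup_is_group M.factorgroup_is_group by (simp add: group_hom_def group_hom_axioms_def)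
qed

lemma FactGroup_map_surj: "(<#>) M ` carrier (G Mod N) = carrier (G Mod M)"
  by (force simp: FactGroup_def RCOSETS_def FactGroup_map_r_coset)

lemma FactGroup_map_kernel: "kernel (G Mod N) (G Mod M) ((<#>) M) = rcosets\<^bsub>G\<lparr>carrier := M\<rparr>\<^esub> N"
proof -
  have "subgroup M G" using M normal_imp_subgroup by blast
  then have "M #> g = M \<longleftrightarrow> g \<in> M" if "g \<in> carrier G" for g
    using that rcos_self subgroup.rcos_const[OF _ is_group] by metis
  moreover have "g \<in> carrier G" if "g \<in> M" for g
    using \<open>subgroup M G\<close> subgroup.subset that by blast
  ultimately show ?thesis
    by (auto simp: kernel_def FactGroup_def RCOSETS_def FactGroup_map_r_coset r_coset_restrict_carrier
        subgroup.rcos_const[OF \<open>subgroup M G\<close> is_group])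
qed

lemma FactGroup_normal_below_chief_factor:
  assumes chief: "\<not> (\<exists>U. U \<lhd> G \<and> N \<subset> U \<and> U \<subset> M)"
    and A: "A \<lhd> G Mod N" and AK: "A \<subseteq> rcosets\<^bsub>G\<lparr>carrier := M\<rparr>\<^esub> N"
  shows "A = {\<one>\<^bsub>G Mod N\<^esub>} \<or> A = rcosets\<^bsub>G\<lparr>carrier := M\<rparr>\<^esub> N"
proof -
  interpret N: normal N G by (fact N)
  have "subgroup A (G Mod N)" using A normal_imp_subgroup by blast
  then have A_eq: "A = rcosets\<^bsub>G\<lparr>carrier := \<Union>A\<rparr>\<^esub> N" and "N \<in> A"
    using N.factgroup_subgroup_union_factor subgroup.one_closed by fastforce+
  have "subgroup M G" using M normal_imp_subgroup by blast
  then have "\<Union>A \<subseteq> M"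
    using AK NM by (fastforce simp: RCOSETS_def r_coset_def subgroup.m_closed)
  moreover have "N \<subseteq> \<Union>A" using \<open>N \<in> A\<close> by blast
  moreover have "\<Union>A \<lhd> G" using A by (rule N.factgroup_subgroup_union_normal)
  ultimately have "\<Union>A = N \<or> \<Union>A = M" using chief by blast
  moreover have "rcosets\<^bsub>G\<lparr>carrier := N\<rparr>\<^esub> N = {N}"
    using N.subgroup_axioms subgroup.rcos_const[OF _ is_group] subgroup.one_closed
    by (force simp: RCOSETS_def r_coset_restrict_carrier)
  ultimately show ?thesis using A_eq by auto
qed

lemma f_pi_chief_factor_mult_card_Ord_pi_le:
  assumes fin: "finite (carrier G)" and chief: "\<not> (\<exists>U. U \<lhd> G \<and> N \<subset> U \<and> U \<subset> M)"
  shows "f_pi \<pi> (G\<lparr>carrier := M\<rparr> Mod N) * card (Ord_pi (G Mod M) (carrier (G Mod M)) \<pi>)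
    \<le> card (Ord_pi (G Mod N) (carrier (G Mod N)) \<pi>)"
proof -
  interpret q: minimal_normal_kernel "G Mod N" "G Mod M" "(<#>) M"
  proof (intro minimal_normal_kernel.intro[OF group_hom_FactGroup_map]
      minimal_normal_kernel_axioms.intro)
    show "finite (carrier (G Mod N))" using fin by (rule finite_carrier_FactGroup)
  qed (use FactGroup_map_surj FactGroup_normal_below_chief_factor[OF chief] in
       \<open>simp_all add: FactGroup_map_kernel\<close>)
  show ?thesis
    using q.f_pi_kernel_mult_card_Ord_pi_le by (simp add: FactGroup_map_kernel FactGroup_restrict_carrier)
qed

end

end

theorem lemma2p1:
  fixes G :: "('a, 'b) monoid_scheme" and \<pi> :: "nat set" and Ns :: "'a set list"
  assumes "group G" and "finite (carrier G)"
    and "\<forall>p \<in> \<pi>. Factorial_Ring.prime p"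
    and "chief_series G Ns"
  shows "card (Ord_pi G (carrier G) \<pi>) \<ge>
           (\<Prod>i < length Ns - 1. f_pi \<pi> (chief_factor G Ns i))"
proof -
  interpret group G by fact
  let ?n = "length Ns - 1"
  let ?c = "\<lambda>i. card (Ord_pi (G Mod (Ns ! i)) (carrier (G Mod (Ns ! i))) \<pi>)"
  have "Ns \<noteq> []" using assms(4) by (simp add: chief_series_def)
  then have series: "Ns ! 0 = {\<one>\<^bsub>G\<^esub>}" "\<And>i. i \<le> ?n \<Longrightarrow> Ns ! i \<lhd> G"
    using assms(4) by (auto simp: chief_series_def hd_conv_nth less_Suc_eq_le[symmetric])
  have telescope: "(\<Prod>i<?n. f_pi \<pi> (chief_factor G Ns i)) * ?c ?n \<le> ?c 0"
  proof (rule prod_mult_le_by_telescoping)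
    fix i assume i: "i < ?n"
    then have "Ns ! i \<subset> Ns ! Suc i" "\<not> (\<exists>U. U \<lhd> G \<and> Ns ! i \<subset> U \<and> U \<subset> Ns ! Suc i)"
      using assms(4) by (auto simp: chief_series_def)
    then show "f_pi \<pi> (chief_factor G Ns i) * ?c (Suc i) \<le> ?c i"
      unfolding chief_factor_def using i
      by (intro f_pi_chief_factor_mult_card_Ord_pi_le series(2) assms(2)) auto
  qed
  have "0 < ?c ?n"
    using series(2) assms(2)
    by (intro group.card_Ord_pi_pos normal.factorgroup_is_group finite_carrier_FactGroup) auto
  then have "(\<Prod>i<?n. f_pi \<pi> (chief_factor G Ns i))
      \<le> (\<Prod>i<?n. f_pi \<pi> (chief_factor G Ns i)) * ?c ?n" by simp
  also have "\<dots> \<le> ?c 0" by (fact telescope)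
  also have "\<dots> \<le> card (Ord_pi G (carrier G) \<pi>)"
    using card_Ord_pi_Mod_one_le[OF assms(2)] series(1) by simp
  finally show ?thesis .
qed

end
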